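(* Let $\boldsymbol\Sigma$ be a stacky fan with fan $\Sigma$, and let $\sigma\in\Sigma$. Then, as subsets of $X(\widetilde\Sigma)$, $\widetilde L_\sigma=\mathbb{V}(\widetilde I_\sigma)\cap X(\widetilde\Sigma)$.
   Context: Work over $\mathbb{C}$. A stacky fan $\boldsymbol\Sigma=(N,\Sigma,(v_1,\dots,v_n))$ consists of a finitely generated abelian group $N$, a fan $\Sigma$ in $N_{\mathbb{R}}$ with rays $\rho_1,\dots,\rho_n$ spanning $N_{\mathbb{R}}$, and $v_i\in N$ with image on $\rho_i$. Let $\bar N=N/\mathrm{torsion}$ and $X(\Sigma)$ the toric variety of $\Sigma$; for a cone $\sigma$, $V(\sigma)$ is the closure of the torus orbit of the distinguished point $\gamma_\sigma$. With $x^{\hat\sigma}=\prod_{\rho_i\notin\sigma(1)}x_i$ and $Z_\Sigma=\mathbb{V}(x^{\hat\sigma}:\sigma\in\Sigma)\subset\mathbb{A}^n$, the Cox space is $X(\widetilde\Sigma)=\mathbb{A}^n\smallsetminus Z_\Sigma$, and $q:X(\widetilde\Sigma)\to X(\Sigma)$ is the toric morphism induced by $\mathbb{Z}^n\to\bar N$, $e_i\mapsto$ image of $v_i$ (a good quotient for the group $G_{\boldsymbol\Sigma}$). Define $\widetilde L_\sigma=q^{-1}(V(\sigma))$. For a cone $\mu\in\Sigma$ containing $\sigma$, let $\widetilde I_{\mu,\sigma}\subset\mathbb{C}[x_1,\dots,x_n]$ be the ideal generated by the monomials $x^{\hat\tau}_\mu=\prod_{\rho_i\in\mu(1)\smallsetminus\tau(1)}x_i$,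 where $\tau$ runs over all proper faces of $\mu$ not containing $\sigma$. Let $\widetilde I_\sigma=\bigcap_{\mu\in\Sigma,\ \mu\supseteq\sigma}\widetilde I_{\mu,\sigma}$. *)

theory Defs
  imports "HOL-Analysis.Analysis" "HOL-Library.Poly_Mapping"
begin

text \<open>The lattice Nbar = N/torsion is identified with int^'d; the dual lattice M is int^'d
  with the standard pairing. v i is the image in Nbar of the stacky-fan vector v_i.\<close>

definition pair :: "int ^ 'd \<Rightarrow> int ^ 'd \<Rightarrow> int" where
  "pair m u = (\<Sum>j\<in>UNIV. m $ j * u $ j)"

definition rvec :: "int ^ 'd \<Rightarrow> real ^ 'd" where
  "rvec u = (\<chi> j. real_of_int (u $ j))"

definition cone_of :: "(nat \<Rightarrow> int ^ 'd) \<Rightarrow> nat set \<Rightarrow> (real ^ 'd) set" where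
  "cone_of v S = {(\<Sum>i\<in>S. c i *\<^sub>R rvec (v i)) | c. \<forall>i\<in>S. c i \<ge> 0}"

text \<open>A stacky fan, recorded by: n rays, the images v i (i < n) in Nbar, and the fan Sig,
  each cone being recorded by the set of indices of its rays.\<close>
definition stacky_fan :: "nat \<Rightarrow> (nat \<Rightarrow> int ^ 'd) \<Rightarrow> nat set set \<Rightarrow> bool" where
  "stacky_fan n v Sig \<longleftrightarrow>
     (\<forall>S\<in>Sig. S \<subseteq> {..<n}) \<and>
     (\<forall>S\<in>Sig. cone_of v S \<inter> uminus ` cone_of v S = {0}) \<and>
     (\<forall>S\<in>Sig. \<forall>F. F face_of cone_of v S \<and> F \<noteq> {} \<longrightarrow> (\<exists>T\<in>Sig. cone_of v T = F)) \<and>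
     (\<forall>S\<in>Sig. \<forall>T\<in>Sig. (cone_of v S \<inter> cone_of v T) face_of cone_of v S
                       \<and> (cone_of v S \<inter> cone_of v T) face_of cone_of v T) \<and>
     (\<forall>i<n. v i \<noteq> 0 \<and> {i} \<in> Sig) \<and>
     (\<forall>i<n. \<forall>j<n. i \<noteq> j \<longrightarrow> cone_of v {i} \<noteq> cone_of v {j}) \<and>
     (\<forall>S\<in>Sig. aff_dim (cone_of v S) = 1 \<longrightarrow> (\<exists>i<n. cone_of v S = cone_of v {i})) \<and>
     (\<forall>S\<in>Sig. \<forall>i<n. cone_of v {i} face_of cone_of v S \<longleftrightarrow> i \<in> S) \<and>
     span (rvec ` v ` {..<n}) = UNIV"

definition semig :: "(nat \<Rightarrow> int ^ 'd) \<Rightarrow> nat set \<Rightarrow> (int ^ 'd) set" where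
  "semig v S = {m. \<forall>i\<in>S. pair m (v i) \<ge> 0}"

text \<open>Points of U_sigma: monoid homomorphisms (semig, +) \<rightarrow> (C, *), extended by 0.\<close>
definition Uset :: "(nat \<Rightarrow> int ^ 'd) \<Rightarrow> nat set \<Rightarrow> (int ^ 'd \<Rightarrow> complex) set" where
  "Uset v S = {g. g 0 = 1 \<and>
      (\<forall>m\<in>semig v S. \<forall>m'\<in>semig v S. g (m + m') = g m * g m') \<and>
      (\<forall>m. m \<notin> semig v S \<longrightarrow> g m = 0)}"

definition Dunion :: "(nat \<Rightarrow> int ^ 'd) \<Rightarrow> nat set set \<Rightarrow> (nat set \<times> (int ^ 'd \<Rightarrow> complex)) set" where
  "Dunion v Sig = {(S, g). S \<in> Sig \<and> g \<in> Uset v S}"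

text \<open>Gluing: two chart points are the same point of X(Sigma) iff both come from a point of
  U_(sigma \<inter> sigma').\<close>
definition glue :: "(nat \<Rightarrow> int ^ 'd) \<Rightarrow> nat set \<times> (int ^ 'd \<Rightarrow> complex)
                    \<Rightarrow> nat set \<times> (int ^ 'd \<Rightarrow> complex) \<Rightarrow> bool" where
  "glue v p p' \<longleftrightarrow> (\<exists>g''\<in>Uset v (fst p \<inter> fst p').
      (\<forall>m\<in>semig v (fst p). snd p m = g'' m) \<and> (\<forall>m\<in>semig v (fst p'). snd p' m = g'' m))"

definition saturated :: "(nat \<Rightarrow> int ^ 'd) \<Rightarrow> nat set set
                         \<Rightarrow> (nat set \<times> (int ^ 'd \<Rightarrow> complex)) set \<Rightarrow> bool" where
  "saturated v Sig C \<longleftrightarrow> (\<forall>p\<in>C. \<forall>p'\<in>Dunion v Sig. glue v p p' \<longrightarrow> p' \<in> C)"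

text \<open>Closed subsets of X(Sigma) (classical topology), represented by their saturated
  preimages in the disjoint union of charts; each chart carries the topology of
  pointwise convergence.\<close>
definition closedX :: "(nat \<Rightarrow> int ^ 'd) \<Rightarrow> nat set set
                       \<Rightarrow> (nat set \<times> (int ^ 'd \<Rightarrow> complex)) set \<Rightarrow> bool" where
  "closedX v Sig C \<longleftrightarrow> C \<subseteq> Dunion v Sig \<and> saturated v Sig C \<and>
     (\<forall>S\<in>Sig. closedin (top_of_set (Uset v S)) {g. (S, g) \<in> C})"

text \<open>Characters of M, i.e. points of the torus T_N = Hom(M, C^*).\<close>
definition torus_pt :: "(int ^ 'd \<Rightarrow> complex) \<Rightarrow> bool" where
  "torus_pt t \<longleftrightarrow> (\<forall>m. t m \<noteq> 0) \<and> (\<forall>m m'. t (m + m') = t m * t m')"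

definition gamma_dist :: "(nat \<Rightarrow> int ^ 'd) \<Rightarrow> nat set \<Rightarrow> int ^ 'd \<Rightarrow> complex" where
  "gamma_dist v S m = (if m \<in> semig v S \<and> (\<forall>i\<in>S. pair m (v i) = 0) then 1 else 0)"

definition orbit_pts :: "(nat \<Rightarrow> int ^ 'd) \<Rightarrow> nat set set \<Rightarrow> nat set
                         \<Rightarrow> (nat set \<times> (int ^ 'd \<Rightarrow> complex)) set" where
  "orbit_pts v Sig S = {p \<in> Dunion v Sig. \<exists>t. torus_pt t \<and>
      glue v p (S, \<lambda>m. t m * gamma_dist v S m)}"

definition Vorb :: "(nat \<Rightarrow> int ^ 'd) \<Rightarrow> nat set set \<Rightarrow> nat set
                    \<Rightarrow> (nat set \<times> (int ^ 'd \<Rightarrow> complex)) set" where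
  "Vorb v Sig S = \<Inter>{C. closedX v Sig C \<and> orbit_pts v Sig S \<subseteq> C}"

text \<open>Points of A^n are functions nat \<Rightarrow> complex vanishing at indices \<ge> n.\<close>
definition Cox :: "nat \<Rightarrow> nat set set \<Rightarrow> (nat \<Rightarrow> complex) set" where
  "Cox n Sig = {x. (\<forall>i\<ge>n. x i = 0) \<and> (\<exists>S\<in>Sig. (\<Prod>i\<in>{..<n} - S. x i) \<noteq> 0)}"

text \<open>q on the chart U_(sigma-tilde) = {x : x_i \<noteq> 0 for rho_i not in sigma}.\<close>
definition qchart :: "nat \<Rightarrow> (nat \<Rightarrow> int ^ 'd) \<Rightarrow> nat set \<Rightarrow> (nat \<Rightarrow> complex)
                      \<Rightarrow> int ^ 'd \<Rightarrow> complex" where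
  "qchart n v S x m = (if m \<in> semig v S then (\<Prod>i<n. x i powi pair m (v i)) else 0)"

definition Ltilde :: "nat \<Rightarrow> (nat \<Rightarrow> int ^ 'd) \<Rightarrow> nat set set \<Rightarrow> nat set \<Rightarrow> (nat \<Rightarrow> complex) set" where
  "Ltilde n v Sig S = {x \<in> Cox n Sig. \<exists>T\<in>Sig. (\<forall>i\<in>{..<n} - T. x i \<noteq> 0) \<and>
       (T, qchart n v T x) \<in> Vorb v Sig S}"

type_synonym mpoly = "(nat \<Rightarrow>\<^sub>0 nat) \<Rightarrow>\<^sub>0 complex"

definition polys :: "nat \<Rightarrow> mpoly set" where
  "polys n = {p. \<forall>a\<in>Poly_Mapping.keys p. \<forall>i\<in>Poly_Mapping.keys a. i < n}"

definition peval :: "mpoly \<Rightarrow> (nat \<Rightarrow> complex) \<Rightarrow> complex" where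
  "peval p x = (\<Sum>a\<in>Poly_Mapping.keys p. Poly_Mapping.lookup p a * (\<Prod>i\<in>Poly_Mapping.keys a. x i ^ Poly_Mapping.lookup a i))"

definition monom_set :: "nat set \<Rightarrow> mpoly" where
  "monom_set A = Poly_Mapping.single (\<Sum>i\<in>A. Poly_Mapping.single i 1) 1"

definition gen_ideal :: "nat \<Rightarrow> mpoly set \<Rightarrow> mpoly set" where
  "gen_ideal n G = {(\<Sum>g\<in>F. r g * g) | F r. finite F \<and> F \<subseteq> G \<and> (\<forall>g. r g \<in> polys n)}"

definition zero_set :: "mpoly set \<Rightarrow> (nat \<Rightarrow> complex) set" where
  "zero_set J = {x. \<forall>p\<in>J. peval p x = 0}"

definition Imu :: "nat \<Rightarrow> (nat \<Rightarrow> int ^ 'd) \<Rightarrow> nat set set \<Rightarrow> nat set \<Rightarrow> nat set \<Rightarrow> mpoly set" where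
  "Imu n v Sig M S = gen_ideal n {monom_set (M - T) | T. T \<in> Sig \<and>
      cone_of v T face_of cone_of v M \<and> cone_of v T \<noteq> cone_of v M \<and>
      \<not> cone_of v S \<subseteq> cone_of v T}"

definition Itilde :: "nat \<Rightarrow> (nat \<Rightarrow> int ^ 'd) \<Rightarrow> nat set set \<Rightarrow> nat set \<Rightarrow> mpoly set" where
  "Itilde n v Sig S = polys n \<inter> (\<Inter>M\<in>{M\<in>Sig. cone_of v S \<subseteq> cone_of v M}. Imu n v Sig M S)"

end

theory Submission
  imports Defs
begin

(*
  The geometric input is an explicit chart description of V(sigma): a chart point (tau, g)
  lies in V(sigma) iff sigma is a face of tau and g vanishes on every m in tau-dual that is
  not orthogonal to sigma.  The inclusion "V(sigma) is contained in this set" holds because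
  the set (Vexplicit) is closed, compatible with the gluing and contains the torus orbit of
  the distinguished point; the converse, for the points q(x), holds because such a point is
  a pointwise limit of orbit points (qchart_in_Vorb).  Both arguments need, for a face of a
  cone of the fan, an INTEGRAL linear form that is nonnegative on the cone and vanishes
  exactly on the face (int_expose); it comes from a real exposing form by rational
  approximation inside the orthogonal complement of the face.

  With this description both inclusions reduce to combinatorics of faces and monomials.
  If q(x) lies in V(sigma), read in the chart of a cone tau, then every proper face tau' of tau
  not containing sigma has a vanishing coordinate x_i with i in tau(1) - tau'(1), so x kills
  I~_(tau,sigma) and a fortiori I~_sigma (Ltilde_subset_zero_set).  Conversely a zero x of
  I~_sigma admits a cone mu containing sigma all of whose proper faces not containing sigma
  have such a vanishing coordinate (zero_set_Itilde_witness); this forces every face of the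
  chart cone of x that contains the rays of the zero coordinates of x to contain sigma, which
  is the chart description of V(sigma) for q(x) (zero_set_subset_Ltilde).
*)

lemma peval_superset:
  assumes "finite K" "Poly_Mapping.keys p \<subseteq> K"
  shows "peval p x = (\<Sum>a\<in>K. Poly_Mapping.lookup p a * (\<Prod>i\<in>Poly_Mapping.keys a. x i ^ Poly_Mapping.lookup a i))"
  unfolding peval_def
  by (rule sum.mono_neutral_left) (use assms in \<open>auto simp: in_keys_iff\<close>)

lemma peval_add: "peval (p + q) x = peval p x + peval q x"
proof -
  let ?K = "Poly_Mapping.keys p \<union> Poly_Mapping.keys q"
  have f: "finite ?K" by simp
  have "peval (p+q) x = (\<Sum>a\<in>?K. Poly_Mapping.lookup (p+q) a * (\<Prod>i\<in>Poly_Mapping.keys a. x i ^ Poly_Mapping.lookup a i))"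
    by (rule peval_superset[OF f]) (use keys_add[of p q] in auto)
  also have "\<dots> = peval p x + peval q x"
    by (simp add: peval_superset[OF f, of p] peval_superset[OF f, of q] lookup_add distrib_right sum.distrib)
  finally show ?thesis .
qed

lemma peval_zero: "peval 0 x = 0"
  by (simp add: peval_def)

lemma peval_sum: "peval (\<Sum>g\<in>F. f g) x = (\<Sum>g\<in>F. peval (f g) x)"
  by (induction F rule: infinite_finite_induct) (auto simp: peval_zero peval_add)

lemma peval_vanish:
  assumes "x i0 = 0" "\<forall>a\<in>Poly_Mapping.keys p. Poly_Mapping.lookup a i0 > 0"
  shows "peval p x = 0"
  unfolding peval_def
proof (rule sum.neutral, intro ballI)
  fix a assume a: "a \<in> Poly_Mapping.keys p"
  then have "i0 \<in> Poly_Mapping.keys a" using assms(2) by (auto simp: in_keys_iff)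
  moreover have "x i0 ^ Poly_Mapping.lookup a i0 = 0" using assms a by auto
  ultimately have "(\<Prod>i\<in>Poly_Mapping.keys a. x i ^ Poly_Mapping.lookup a i) = 0"
    by (meson finite_keys prod_zero)
  then show "Poly_Mapping.lookup p a * (\<Prod>i\<in>Poly_Mapping.keys a. x i ^ Poly_Mapping.lookup a i) = 0" by simp
qed

lemma lookup_indsum: "finite A \<Longrightarrow> Poly_Mapping.lookup (\<Sum>i\<in>A. Poly_Mapping.single i (1::nat)) j = (if j \<in> A then 1 else 0)"
  unfolding lookup_sum lookup_single when_def by (simp add: sum.delta)

lemma keys_indsum: "finite A \<Longrightarrow> Poly_Mapping.keys (\<Sum>i\<in>A. Poly_Mapping.single i (1::nat)) = A"
  by (auto simp del: One_nat_def simp: in_keys_iff lookup_indsum split: if_splits)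

lemma peval_monom_set: "finite A \<Longrightarrow> peval (monom_set A) x = (\<Prod>i\<in>A. x i)"
  unfolding peval_def monom_set_def
  by (simp del: One_nat_def add: keys_indsum lookup_indsum)

lemma monom_set_polys: "A \<subseteq> {..<n} \<Longrightarrow> finite A \<Longrightarrow> monom_set A \<in> polys n"
  by (auto simp del: One_nat_def simp: polys_def monom_set_def keys_indsum)

lemma monom_set_union: "finite A \<Longrightarrow> finite B \<Longrightarrow> A \<inter> B = {} \<Longrightarrow>
   monom_set (A \<union> B) = monom_set A * monom_set B"
  by (simp add: monom_set_def mult_single sum.union_disjoint)

lemma mult_monom_set_keys:
  assumes "finite A" "i0 \<in> A"
  shows "\<forall>a\<in>Poly_Mapping.keys (r * monom_set A). Poly_Mapping.lookup a i0 > 0"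
proof
  fix a assume "a \<in> Poly_Mapping.keys (r * monom_set A)"
  then obtain b c where "a = b + c" "c \<in> Poly_Mapping.keys (monom_set A)"
    using keys_mult by blast
  then have "c = (\<Sum>i\<in>A. Poly_Mapping.single i 1)" by (simp add: monom_set_def)
  then show "Poly_Mapping.lookup a i0 > 0" using \<open>a = b + c\<close> assms
    by (simp del: One_nat_def add: lookup_indsum lookup_add)
qed

lemma gen_ideal_vanish:
  assumes "\<forall>g\<in>G. \<exists>A i0. g = monom_set A \<and> finite A \<and> i0 \<in> A \<and> x i0 = 0" "p \<in> gen_ideal n G"
  shows "peval p x = 0"
proof -
  obtain F r where p: "p = (\<Sum>g\<in>F. r g * g)" "F \<subseteq> G" using assms(2) by (auto simp: gen_ideal_def)
  have "peval (r g * g) x = 0" if gF: "g \<in> F" for g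
  proof -
    obtain A i0 where "g = monom_set A" "finite A" "i0 \<in> A" "x i0 = 0" using assms(1) p(2) gF by blast
    then show ?thesis using peval_vanish mult_monom_set_keys by metis
  qed
  then show ?thesis by (simp add: p peval_sum)
qed

section \<open>Cones spanned by lattice vectors\<close>

lemma cone_of_convex_cone: "convex_cone (cone_of v T)"
  unfolding convex_cone_iff
proof (intro conjI ballI allI impI)
  show "0 \<in> cone_of v T" unfolding cone_of_def by (rule CollectI, rule exI[of _ "\<lambda>_. 0"]) auto
next
  fix x y assume "x \<in> cone_of v T" "y \<in> cone_of v T"
  then obtain c d where "x = (\<Sum>i\<in>T. c i *\<^sub>R rvec (v i))" "\<forall>i\<in>T. c i \<ge> 0"
     "y = (\<Sum>i\<in>T. d i *\<^sub>R rvec (v i))" "\<forall>i\<in>T. d i \<ge> 0" by (auto simp: cone_of_def)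
  then show "x + y \<in> cone_of v T" unfolding cone_of_def
    by (intro CollectI exI[of _ "\<lambda>i. c i + d i"]) (auto simp: scaleR_add_left sum.distrib)
next
  fix x and a :: real assume "x \<in> cone_of v T" "0 \<le> a"
  then obtain c where "x = (\<Sum>i\<in>T. c i *\<^sub>R rvec (v i))" "\<forall>i\<in>T. c i \<ge> 0" by (auto simp: cone_of_def)
  then show "a *\<^sub>R x \<in> cone_of v T" using \<open>0 \<le> a\<close> unfolding cone_of_def
    by (intro CollectI exI[of _ "\<lambda>i. a * c i"]) (auto simp: scaleR_sum_right)
qed

lemma cone_of_0: "0 \<in> cone_of v T"
  using cone_of_convex_cone convex_cone_contains_0 by blast

lemma cone_of_hull:
  assumes "finite T"
  shows "cone_of v T = convex_cone hull (rvec ` v ` T)"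
proof
  show "cone_of v T \<subseteq> convex_cone hull (rvec ` v ` T)"
  proof
    fix y assume "y \<in> cone_of v T"
    then obtain c where y: "y = (\<Sum>i\<in>T. c i *\<^sub>R rvec (v i))" and c: "\<forall>i\<in>T. c i \<ge> 0"
      by (auto simp: cone_of_def)
    have "(\<Sum>i\<in>T'. c i *\<^sub>R rvec (v i)) \<in> convex_cone hull (rvec ` v ` T)" if "T' \<subseteq> T" for T'
      using finite_subset[OF that assms] that
    proof (induction T' rule: finite_induct)
      case empty then show ?case by (simp add: convex_cone_hull_contains_0)
    next
      case (insert i T')
      have "rvec (v i) \<in> convex_cone hull (rvec ` v ` T)" using insert by (intro hull_inc) auto
      then have "c i *\<^sub>R rvec (v i) \<in> convex_cone hull (rvec ` v ` T)"
        using c insert by (intro convex_cone_hull_mul) auto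
      then show ?case using insert by (simp add: convex_cone_hull_add)
    qed
    then show "y \<in> convex_cone hull (rvec ` v ` T)" using y by blast
  qed
next
  have "rvec (v j) \<in> cone_of v T" if j: "j \<in> T" for j
  proof -
    have "(\<Sum>i\<in>T. (if i = j then 1 else 0) *\<^sub>R rvec (v i)) = (\<Sum>i\<in>T. if i = j then rvec (v i) else 0)"
      by (rule sum.cong) auto
    also have "\<dots> = rvec (v j)" using j assms by (simp add: sum.delta)
    finally show ?thesis unfolding cone_of_def
      by (intro CollectI exI[of _ "\<lambda>i. if i = j then 1 else 0"]) (use j in auto)
  qed
  then show "convex_cone hull (rvec ` v ` T) \<subseteq> cone_of v T"
    using cone_of_convex_cone by (intro hull_minimal) auto
qed

lemma cone_of_inc: "finite T \<Longrightarrow> i \<in> T \<Longrightarrow> rvec (v i) \<in> cone_of v T"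
  by (simp add: cone_of_hull hull_inc)

lemma cone_of_mono: "finite T \<Longrightarrow> S \<subseteq> T \<Longrightarrow> cone_of v S \<subseteq> cone_of v T"
  using finite_subset[of S T] by (simp add: cone_of_hull hull_mono image_mono)

lemma cone_of_least: "finite S \<Longrightarrow> convex_cone K \<Longrightarrow> (\<forall>j\<in>S. rvec (v j) \<in> K) \<Longrightarrow> cone_of v S \<subseteq> K"
  by (simp add: cone_of_hull hull_minimal image_subset_iff)

text \<open>Cones are polyhedral, so every nonempty face is cut out by a supporting hyperplane
  through the origin.\<close>
lemma real_expose:
  assumes "finite T" "F face_of cone_of v T" "F \<noteq> {}"
  shows "\<exists>u. (\<forall>y\<in>cone_of v T. u \<bullet> y \<ge> 0) \<and> F = cone_of v T \<inter> {y. u \<bullet> y = 0}"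
proof -
  have "polyhedron (cone_of v T)" using assms(1) by (simp add: cone_of_hull polyhedron_convex_cone_hull)
  then have "F exposed_face_of cone_of v T" using assms(2) exposed_face_of_polyhedron by blast
  then obtain a b where ab: "cone_of v T \<subseteq> {x. a \<bullet> x \<le> b}" "F = cone_of v T \<inter> {x. a \<bullet> x = b}"
    unfolding exposed_face_of_def by blast
  obtain y where y: "y \<in> F" using assms(3) by blast
  have "2 *\<^sub>R y \<in> cone_of v T"
    using y ab by (intro convex_cone_scaleR[OF cone_of_convex_cone]) auto
  then have "a \<bullet> (2 *\<^sub>R y) \<le> b" using ab by auto
  moreover have "a \<bullet> y = b" using y ab by auto
  moreover have "0 \<le> b" using cone_of_0[of v T] ab by auto
  ultimately have b: "b = 0" by (simp add: inner_scaleR_right)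
  show ?thesis
    by (rule exI[of _ "-a"]) (use ab b in auto)
qed

lemma face_convex_cone:
  assumes "finite T" "F face_of cone_of v T" "F \<noteq> {}"
  shows "convex_cone F"
proof -
  obtain u where u: "F = cone_of v T \<inter> {y. u \<bullet> y = 0}"
    using real_expose[OF assms] by blast
  have "convex_cone {y. u \<bullet> y = 0}" by (auto simp: convex_cone_iff inner_add_right)
  then show ?thesis using u cone_of_convex_cone[of v T]
    by (auto simp: convex_cone_iff)
qed

section \<open>Integral exposing forms\<close>

definition rat_vec :: "real ^ 'd \<Rightarrow> bool" where
  "rat_vec q \<longleftrightarrow> (\<forall>j. q $ j \<in> \<rat>)"

lemma rat_vec_rvec: "rat_vec (rvec w)"
  by (simp add: rat_vec_def rvec_def)

lemma inner_rat: "rat_vec a \<Longrightarrow> rat_vec q \<Longrightarrow> a \<bullet> q \<in> \<rat>"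
  unfolding rat_vec_def inner_vec_def by (auto intro!: Rats_sum Rats_mult)

lemma rat_vec_dense:
  fixes u :: "real ^ 'd"
  assumes "e > 0"
  shows "\<exists>q. rat_vec q \<and> norm (q - u) < e"
proof -
  define d where "d = e / real CARD('d)"
  have d: "d > 0" using assms by (simp add: d_def)
  have "\<forall>j. \<exists>r\<in>\<rat>. u $ j < r \<and> r < u $ j + d" using d by (intro allI Rats_dense_in_real) auto
  then obtain r where r: "\<And>j. r j \<in> \<rat> \<and> u $ j < r j \<and> r j < u $ j + d" by metis
  define q where "q = (\<chi> j. r j)"
  have "norm (q - u) \<le> (\<Sum>j\<in>UNIV. \<bar>(q - u) $ j\<bar>)" by (rule norm_le_l1_cart)
  also have "\<dots> < (\<Sum>j\<in>(UNIV::'d set). d)"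
  proof (rule sum_strict_mono)
    fix j :: 'd
    have "u $ j < r j" "r j < u $ j + d" using r[of j] by auto
    then show "\<bar>(q - u) $ j\<bar> < d" by (simp add: q_def)
  qed auto
  also have "\<dots> = e" by (simp add: d_def)
  finally have "norm (q - u) < e" .
  moreover have "rat_vec q" using r by (simp add: rat_vec_def q_def)
  ultimately show ?thesis by blast
qed

lemma rat_vec_correction:
  fixes a q u w :: "real ^ 'd"
  assumes q: "rat_vec q" and w: "rat_vec w" and a: "rat_vec a" and aw: "a \<bullet> w \<noteq> 0"
    and au: "a \<bullet> u = 0"
  defines "q' \<equiv> q - ((a \<bullet> q) / (a \<bullet> w)) *\<^sub>R w"
  shows "rat_vec q'" "a \<bullet> q' = 0"
    and "norm (q' - u) \<le> norm (q - u) * (1 + norm a * (norm w / \<bar>a \<bullet> w\<bar>))"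
proof -
  have c: "(a \<bullet> q) / (a \<bullet> w) \<in> \<rat>" using inner_rat[OF a q] inner_rat[OF a w] by (rule Rats_divide)
  have "(q - c *\<^sub>R w) $ j \<in> \<rat>" if "c \<in> \<rat>" for c j
  proof -
    have "q $ j \<in> \<rat>" "w $ j \<in> \<rat>" using q w by (auto simp: rat_vec_def)
    then show ?thesis using that by (simp add: Rats_diff)
  qed
  then show "rat_vec q'" using c unfolding rat_vec_def q'_def by blast
  show "a \<bullet> q' = 0" using aw by (simp add: q'_def inner_diff_right)
  have "\<bar>a \<bullet> q\<bar> = \<bar>a \<bullet> (q - u)\<bar>" using au by (simp add: inner_diff_right)
  also have "\<dots> \<le> norm a * norm (q - u)" by (rule Cauchy_Schwarz_ineq2)
  finally have aq: "\<bar>a \<bullet> q\<bar> \<le> norm a * norm (q - u)" .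
  have "q' - u = (q - u) - ((a \<bullet> q) / (a \<bullet> w)) *\<^sub>R w" by (simp add: q'_def)
  then have tri: "norm (q' - u) \<le> norm (q - u) + norm (((a \<bullet> q) / (a \<bullet> w)) *\<^sub>R w)"
    using norm_triangle_ineq4 by metis
  have "norm (((a \<bullet> q) / (a \<bullet> w)) *\<^sub>R w) = \<bar>a \<bullet> q\<bar> * (norm w / \<bar>a \<bullet> w\<bar>)"
    by (simp add: abs_divide)
  also have "\<dots> \<le> norm a * norm (q - u) * (norm w / \<bar>a \<bullet> w\<bar>)"
    by (rule mult_right_mono[OF aq]) simp
  finally have shift: "norm (((a \<bullet> q) / (a \<bullet> w)) *\<^sub>R w) \<le> norm a * norm (q - u) * (norm w / \<bar>a \<bullet> w\<bar>)" .
  have "norm (q - u) * (1 + norm a * (norm w / \<bar>a \<bullet> w\<bar>))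
      = norm (q - u) + norm a * norm (q - u) * (norm w / \<bar>a \<bullet> w\<bar>)"
    by (simp add: ring_distribs)
  then show "norm (q' - u) \<le> norm (q - u) * (1 + norm a * (norm w / \<bar>a \<bullet> w\<bar>))"
    using tri shift by linarith
qed

lemma rat_vec_dense_subspace:
  fixes u :: "real ^ 'd"
  assumes "finite A" "\<forall>a\<in>A. rat_vec a" "\<forall>a\<in>A. a \<bullet> u = 0" "e > 0"
  shows "\<exists>q. rat_vec q \<and> (\<forall>a\<in>A. a \<bullet> q = 0) \<and> norm (q - u) < e"
  using assms
proof (induction A arbitrary: e rule: finite_induct)
  case empty then show ?case using rat_vec_dense by simp
next
  case (insert a A)
  show ?case
  proof (cases "\<forall>q. rat_vec q \<and> (\<forall>b\<in>A. b \<bullet> q = 0) \<longrightarrow> a \<bullet> q = 0")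
    case True
    then show ?thesis using insert.IH[of e] insert.prems by auto
  next
    case False
    then obtain w where w: "rat_vec w" "\<forall>b\<in>A. b \<bullet> w = 0" "a \<bullet> w \<noteq> 0" by blast
    define K where "K = 1 + norm a * (norm w / \<bar>a \<bullet> w\<bar>)"
    have K: "K \<ge> 1" unfolding K_def by (simp add: divide_nonneg_nonneg)
    obtain q where q: "rat_vec q" "\<forall>b\<in>A. b \<bullet> q = 0" "norm (q - u) < e / K"
      using insert.IH[of "e / K"] insert.prems K by auto
    define q' where "q' = q - ((a \<bullet> q) / (a \<bullet> w)) *\<^sub>R w"
    note corr = rat_vec_correction[OF q(1) w(1) _ w(3), of u, folded q'_def K_def]
    have "norm (q' - u) \<le> norm (q - u) * K" using corr(3) insert.prems by simp
    also have "\<dots> < e" using q(3) K by (simp add: pos_less_divide_eq)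
    finally have "norm (q' - u) < e" .
    moreover have "\<forall>b\<in>A. b \<bullet> q' = 0" using q(2) w(2) by (simp add: q'_def inner_diff_right)
    ultimately show ?thesis using corr(1,2) insert.prems by (auto intro!: exI[of _ q'])
  qed
qed

lemma common_denom:
  fixes X :: "real set"
  assumes "finite X" "X \<subseteq> \<rat>"
  shows "\<exists>D::int. D > 0 \<and> (\<forall>x\<in>X. of_int D * x \<in> \<int>)"
  using assms
proof (induction X rule: finite_induct)
  case empty then show ?case by (intro exI[of _ 1]) auto
next
  case (insert x X)
  then obtain D :: int where D: "D > 0" "\<forall>y\<in>X. of_int D * y \<in> \<int>" by auto
  from insert.prems have "x \<in> \<rat>" by auto
  then obtain a b :: int where ab: "b > 0" "x = of_int a / of_int b" by (rule Rats_cases') auto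
  have "of_int (D * b) * x = of_int (D * a)" using ab by (simp add: field_simps)
  moreover have "of_int (D * b) * y \<in> \<int>" if "y \<in> X" for y
  proof -
    have "of_int (D * b) * y = of_int b * (of_int D * y)" by simp
    then show ?thesis using D that by (metis Ints_mult Ints_of_int)
  qed
  ultimately show ?case using D ab by (intro exI[of _ "D * b"]) auto
qed

lemma rat_vec_int_multiple:
  fixes q :: "real ^ 'd"
  assumes "rat_vec q"
  shows "\<exists>D::int. \<exists>m. D > 0 \<and> (\<forall>w. real_of_int (pair m w) = of_int D * (rvec w \<bullet> q))"
proof -
  obtain D :: int where D: "D > 0" "\<forall>x\<in>range (\<lambda>j. q $ j). of_int D * x \<in> \<int>"
    using common_denom[of "range (\<lambda>j. q $ j)"] assms by (auto simp: rat_vec_def)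
  define m where "m = (\<chi> j. \<lfloor>of_int D * q $ j\<rfloor>)"
  have mj: "real_of_int (m $ j) = of_int D * q $ j" for j
  proof -
    have "of_int D * q $ j \<in> \<int>" using D(2) by auto
    then obtain z where "of_int D * q $ j = of_int z" by (auto elim: Ints_cases)
    then show ?thesis by (simp add: m_def)
  qed
  have "real_of_int (pair m w) = of_int D * (rvec w \<bullet> q)" for w
    by (simp add: pair_def rvec_def inner_vec_def mj sum_distrib_left algebra_simps)
  then show ?thesis using D(1) by blast
qed

text \<open>The real exposing form u is
  positive on the generators outside F, an open condition, so it can be replaced by a nearby
  rational form that still vanishes on the generators in F.\<close>
lemma int_expose:
  fixes v :: "nat \<Rightarrow> int ^ 'd"
  assumes "finite T" "F face_of cone_of v T" "F \<noteq> {}"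
  shows "\<exists>m. \<forall>i\<in>T. pair m (v i) \<ge> 0 \<and> (pair m (v i) = 0 \<longleftrightarrow> rvec (v i) \<in> F)"
proof -
  obtain u where u: "\<forall>y\<in>cone_of v T. u \<bullet> y \<ge> 0" "F = cone_of v T \<inter> {y. u \<bullet> y = 0}"
    using real_expose[OF assms] by blast
  define A where "A = rvec ` v ` {i\<in>T. rvec (v i) \<in> F}"
  define Pos where "Pos = (\<Inter>i\<in>{i\<in>T. rvec (v i) \<notin> F}. {w. rvec (v i) \<bullet> w > 0})"
  have "open Pos" unfolding Pos_def using assms(1) by (intro open_INT) (auto intro: open_halfspace_gt)
  moreover have "u \<in> Pos"
    using u cone_of_inc[OF assms(1)] by (force simp: Pos_def inner_commute)
  ultimately obtain e where e: "e > 0" "ball u e \<subseteq> Pos" by (meson open_contains_ball)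
  have "\<forall>a\<in>A. a \<bullet> u = 0" using u by (auto simp: A_def inner_commute)
  moreover have "\<forall>a\<in>A. rat_vec a" by (auto simp: A_def rat_vec_rvec)
  moreover have "finite A" using assms(1) by (simp add: A_def)
  ultimately obtain q where q: "rat_vec q" "\<forall>a\<in>A. a \<bullet> q = 0" "norm (q - u) < e"
    using rat_vec_dense_subspace e by blast
  have "q \<in> Pos" using e q by (auto simp: dist_norm norm_minus_commute)
  obtain D m where D: "D > 0" and pm: "\<And>w. real_of_int (pair m w) = of_int D * (rvec w \<bullet> q)"
    using rat_vec_int_multiple[OF q(1)] by blast
  have "pair m (v i) \<ge> 0 \<and> (pair m (v i) = 0 \<longleftrightarrow> rvec (v i) \<in> F)" if i: "i \<in> T" for i
  proof (cases "rvec (v i) \<in> F")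
    case True
    then have "real_of_int (pair m (v i)) = 0" using i q(2) pm by (simp add: A_def)
    then show ?thesis using True by simp
  next
    case False
    then have "rvec (v i) \<bullet> q > 0" using \<open>q \<in> Pos\<close> i by (auto simp: Pos_def)
    then have "real_of_int (pair m (v i)) > 0" using pm D by simp
    then show ?thesis using False by simp
  qed
  then show ?thesis by blast
qed


lemma pair_add: "pair (a + b) u = pair a u + pair b u"
  by (simp add: pair_def sum.distrib algebra_simps)

lemma pair_uminus: "pair (- a) u = - pair a u"
  by (simp add: pair_def sum_negf)

lemma pair_zero: "pair 0 u = 0"
  by (simp add: pair_def)

lemma pair_smult: "pair (c *s a) u = c * pair a u"
  by (simp add: pair_def sum_distrib_left algebra_simps)

lemma rvec_inner: "rvec m \<bullet> rvec u = real_of_int (pair m u)"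
  by (simp add: rvec_def pair_def inner_vec_def)

lemma semig_anti: "S \<subseteq> T \<Longrightarrow> semig v T \<subseteq> semig v S"
  by (auto simp: semig_def)

lemma semig_add: "m \<in> semig v T \<Longrightarrow> m' \<in> semig v T \<Longrightarrow> m + m' \<in> semig v T"
  by (auto simp: semig_def pair_add)

lemma semig_0: "0 \<in> semig v T"
  by (auto simp: semig_def pair_zero)

lemma shift_into_semig:
  assumes "finite T" "\<forall>i\<in>T. pair m0 (v i) \<ge> 0"
    and "\<forall>i\<in>T. pair m0 (v i) = 0 \<longrightarrow> pair m' (v i) \<ge> 0"
  shows "\<exists>k::nat. m' + of_nat k *s m0 \<in> semig v T"
proof -
  define k where "k = nat (\<Sum>i\<in>T. \<bar>pair m' (v i)\<bar>)"
  have "pair (m' + of_nat k *s m0) (v i) \<ge> 0" if i: "i \<in> T" for i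
  proof (cases "pair m0 (v i) = 0")
    case True
    then show ?thesis using assms(3) i by (simp add: pair_add pair_smult)
  next
    case False
    moreover have "pair m0 (v i) \<ge> 0" using assms(2) i by blast
    ultimately have "pair m0 (v i) \<ge> 1" by linarith
    then have "int k * pair m0 (v i) \<ge> int k" by (simp add: mult_le_cancel_left1)
    moreover have "\<bar>pair m' (v i)\<bar> \<le> (\<Sum>i\<in>T. \<bar>pair m' (v i)\<bar>)"
      using i assms(1) by (intro member_le_sum) auto
    ultimately show ?thesis by (simp add: k_def pair_add pair_smult)
  qed
  then show ?thesis by (auto simp: semig_def)
qed

context
  fixes n :: nat and v :: "nat \<Rightarrow> int ^ 'd" and Sig :: "nat set set"
  assumes SF: "stacky_fan n v Sig"
begin

lemma sf_sub: "T \<in> Sig \<Longrightarrow> T \<subseteq> {..<n}"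
  using SF by (auto simp: stacky_fan_def)

lemma sf_fin: "T \<in> Sig \<Longrightarrow> finite T"
  using sf_sub finite_subset by blast

lemma sf_ray: "T \<in> Sig \<Longrightarrow> i < n \<Longrightarrow> cone_of v {i} face_of cone_of v T \<longleftrightarrow> i \<in> T"
  using SF by (auto simp: stacky_fan_def)

lemma sf_face: "T \<in> Sig \<Longrightarrow> F face_of cone_of v T \<Longrightarrow> F \<noteq> {} \<Longrightarrow> \<exists>R\<in>Sig. cone_of v R = F"
  using SF by (auto simp: stacky_fan_def)

lemma sf_int: "T \<in> Sig \<Longrightarrow> T' \<in> Sig \<Longrightarrow> (cone_of v T \<inter> cone_of v T') face_of cone_of v T"
  using SF by (auto simp: stacky_fan_def)

lemma sf_ray_in:
  assumes "T \<in> Sig" "R \<in> Sig" "cone_of v R face_of cone_of v T" "i \<in> T" "rvec (v i) \<in> cone_of v R"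
  shows "i \<in> R"
proof -
  have i: "i < n" using sf_sub assms by auto
  have "cone_of v {i} \<subseteq> cone_of v R"
    by (rule cone_of_least) (use assms sf_fin in \<open>auto intro: cone_of_convex_cone\<close>)
  moreover have "cone_of v R \<subseteq> cone_of v T" using assms(3) face_of_imp_subset by blast
  moreover have "cone_of v {i} face_of cone_of v T" using sf_ray assms i by blast
  ultimately have "cone_of v {i} face_of cone_of v R" by (meson face_of_subset)
  then show ?thesis using sf_ray assms(2) i by blast
qed

lemma sf_inter:
  assumes "T \<in> Sig" "T' \<in> Sig"
  shows "T \<inter> T' \<in> Sig" "cone_of v (T \<inter> T') = cone_of v T \<inter> cone_of v T'"
proof -
  have f1: "(cone_of v T \<inter> cone_of v T') face_of cone_of v T" using sf_int assms by blast
  have f2: "(cone_of v T \<inter> cone_of v T') face_of cone_of v T'"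
    using sf_int[OF assms(2,1)] by (simp add: Int_commute)
  have "0 \<in> cone_of v T \<inter> cone_of v T'" using cone_of_0 by blast
  then obtain R where R: "R \<in> Sig" "cone_of v R = cone_of v T \<inter> cone_of v T'"
    using sf_face[OF assms(1) f1] by blast
  have "R \<subseteq> T \<inter> T'"
  proof
    fix i assume i: "i \<in> R"
    have "i < n" using sf_sub R i by auto
    have "cone_of v {i} face_of cone_of v R" using sf_ray R i \<open>i < n\<close> by blast
    then have "cone_of v {i} face_of cone_of v T" "cone_of v {i} face_of cone_of v T'"
      using R f1 f2 face_of_trans by metis+
    then show "i \<in> T \<inter> T'" using sf_ray assms \<open>i < n\<close> by blast
  qed
  moreover have "T \<inter> T' \<subseteq> R"
  proof
    fix i assume i: "i \<in> T \<inter> T'"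
    then have "rvec (v i) \<in> cone_of v R" using R cone_of_inc sf_fin assms by blast
    then show "i \<in> R" using sf_ray_in[OF assms(1) R(1)] R f1 i by auto
  qed
  ultimately have "R = T \<inter> T'" by blast
  then show "T \<inter> T' \<in> Sig" "cone_of v (T \<inter> T') = cone_of v T \<inter> cone_of v T'" using R by simp_all
qed

lemma sf_cone_subset:
  assumes "S \<in> Sig" "T \<in> Sig" "cone_of v S \<subseteq> cone_of v T"
  shows "S \<subseteq> T"
proof
  fix j assume j: "j \<in> S"
  have "j < n" using sf_sub assms(1) j by auto
  have "cone_of v {j} face_of cone_of v S" using sf_ray[OF assms(1) \<open>j < n\<close>] j by blast
  moreover have "cone_of v S face_of cone_of v T"
    using sf_int[OF assms(2,1)] assms(3) by (simp add: Int_absorb1)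
  ultimately have "cone_of v {j} face_of cone_of v T" by (rule face_of_trans)
  then show "j \<in> T" using sf_ray[OF assms(2) \<open>j < n\<close>] by blast
qed

lemma face_character:
  assumes "T \<in> Sig" "R \<in> Sig" "cone_of v R face_of cone_of v T"
  shows "\<exists>m. \<forall>i\<in>T. pair m (v i) \<ge> 0 \<and> (pair m (v i) = 0 \<longleftrightarrow> i \<in> R)"
proof -
  have "cone_of v R \<noteq> {}" using cone_of_0 by blast
  then obtain m where m: "\<forall>i\<in>T. pair m (v i) \<ge> 0 \<and> (pair m (v i) = 0 \<longleftrightarrow> rvec (v i) \<in> cone_of v R)"
    using int_expose[OF sf_fin[OF assms(1)] assms(3)] by blast
  have "rvec (v i) \<in> cone_of v R \<longleftrightarrow> i \<in> R" if "i \<in> T" for i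
    using sf_ray_in[OF assms that] cone_of_inc[OF sf_fin[OF assms(2)]] by blast
  then show ?thesis using m by blast
qed

lemma separating_character:
  assumes "T \<in> Sig" "T' \<in> Sig"
  shows "\<exists>m. \<forall>i\<in>T. pair m (v i) \<ge> 0 \<and> (pair m (v i) = 0 \<longleftrightarrow> i \<in> T')"
proof -
  have "cone_of v (T \<inter> T') face_of cone_of v T" using sf_inter[OF assms] sf_int[OF assms] by simp
  then show ?thesis using face_character[OF assms(1) sf_inter(1)[OF assms]] by auto
qed

end

lemma glue_sym: "glue v p p' \<Longrightarrow> glue v p' p"
  unfolding glue_def by (metis Int_commute)

lemma powi_add_nonneg: "(0::int) \<le> a \<Longrightarrow> 0 \<le> b \<Longrightarrow> (x::complex) powi (a + b) = x powi a * x powi b"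
  by (cases "x = 0") (auto simp: power_int_add power_int_0_left_if)

lemma qchart_Uset:
  assumes "\<forall>i<n. i \<notin> T \<longrightarrow> z i \<noteq> 0"
  shows "qchart n v T z \<in> Uset v T"
  unfolding Uset_def
proof (intro CollectI conjI ballI allI impI)
  show "qchart n v T z 0 = 1" by (simp add: qchart_def semig_0 pair_zero)
next
  fix m m' assume m: "m \<in> semig v T" "m' \<in> semig v T"
  have "z i powi pair (m + m') (v i) = z i powi pair m (v i) * z i powi pair m' (v i)" if "i < n" for i
  proof (cases "i \<in> T")
    case True
    then have "pair m (v i) \<ge> 0" "pair m' (v i) \<ge> 0" using m by (auto simp: semig_def)
    then show ?thesis by (simp add: pair_add powi_add_nonneg)
  next
    case False
    then show ?thesis using assms that by (simp add: pair_add power_int_add)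
  qed
  then show "qchart n v T z (m + m') = qchart n v T z m * qchart n v T z m'"
    using m semig_add[OF m] by (simp add: qchart_def prod.distrib[symmetric])
next
  fix m assume "m \<notin> semig v T"
  then show "qchart n v T z m = 0" by (simp add: qchart_def)
qed

lemma Uset_power:
  assumes "g \<in> Uset v R" "m' \<in> semig v R" "m0 \<in> semig v R"
  shows "m' + of_nat k *s m0 \<in> semig v R \<and> g (m' + of_nat k *s m0) = g m' * g m0 ^ k"
proof (induction k)
  case 0 then show ?case using assms(2) by simp
next
  case (Suc k)
  have eq: "m' + of_nat (Suc k) *s m0 = (m' + of_nat k *s m0) + m0"
    by (simp add: vector_sadd_rdistrib algebra_simps)
  have "g (m' + of_nat (Suc k) *s m0) = g ((m' + of_nat k *s m0) + m0)" by (simp only: eq)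
  also have "\<dots> = g (m' + of_nat k *s m0) * g m0"
    using assms(1,3) Suc unfolding Uset_def by blast
  also have "\<dots> = g m' * g m0 ^ Suc k" using Suc by simp
  moreover have "m' + of_nat (Suc k) *s m0 \<in> semig v R"
    unfolding eq using Suc semig_add assms(3) by blast
  ultimately show ?case by simp
qed

lemma Uset_unit:
  assumes "g \<in> Uset v R" "m \<in> semig v R" "- m \<in> semig v R"
  shows "g m \<noteq> 0"
proof -
  have "g (m + - m) = g m * g (- m)" using assms unfolding Uset_def by blast
  then have "g m * g (- m) = g 0" by simp
  also have "\<dots> = 1" using assms(1) by (simp add: Uset_def)
  finally show ?thesis by auto
qed

lemma torus_pt_0: "torus_pt t \<Longrightarrow> t 0 = 1"
proof -
  assume t: "torus_pt t"
  have "t (0 + 0) = t 0 * t 0" using t unfolding torus_pt_def by blast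
  then have "t 0 * 1 = t 0 * t 0" by simp
  moreover have "t 0 \<noteq> 0" using t unfolding torus_pt_def by blast
  ultimately show "t 0 = 1" by (metis mult_left_cancel)
qed

text \<open>The distinguished point is multiplicative, since sigma-perp \<inter> sigma-dual is a face of
  sigma-dual.\<close>
lemma gamma_mult:
  assumes m: "m \<in> semig v S" "m' \<in> semig v S"
  shows "gamma_dist v S (m + m') = gamma_dist v S m * gamma_dist v S m'"
proof -
  have "pair (m+m') (v i) = 0 \<longleftrightarrow> pair m (v i) = 0 \<and> pair m' (v i) = 0" if "i \<in> S" for i
  proof -
    have "pair m (v i) \<ge> 0" "pair m' (v i) \<ge> 0" using m that by (auto simp: semig_def)
    then show ?thesis unfolding pair_add by arith
  qed
  then have "(\<forall>i\<in>S. pair (m+m') (v i) = 0) \<longleftrightarrow> (\<forall>i\<in>S. pair m (v i) = 0) \<and> (\<forall>i\<in>S. pair m' (v i) = 0)"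
    by blast
  then show ?thesis using m semig_add[OF m] unfolding gamma_dist_def by auto
qed

lemma gamma_Uset:
  assumes t: "torus_pt t"
  shows "(\<lambda>m. t m * gamma_dist v S m) \<in> Uset v S"
  unfolding Uset_def
proof (intro CollectI conjI ballI allI impI)
  show "t 0 * gamma_dist v S 0 = 1" using torus_pt_0[OF t] by (simp add: gamma_dist_def semig_0 pair_zero)
next
  fix m m' assume m: "m \<in> semig v S" "m' \<in> semig v S"
  have "t (m + m') = t m * t m'" using t unfolding torus_pt_def by blast
  then show "t (m + m') * gamma_dist v S (m + m') = t m * gamma_dist v S m * (t m' * gamma_dist v S m')"
    using gamma_mult[OF m] by (simp add: algebra_simps)
next
  fix m assume "m \<notin> semig v S" then show "t m * gamma_dist v S m = 0" by (simp add: gamma_dist_def)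
qed

section \<open>An explicit closed set containing V(sigma)\<close>

definition Vexplicit :: "(nat \<Rightarrow> int ^ 'd) \<Rightarrow> nat set set \<Rightarrow> nat set
                         \<Rightarrow> (nat set \<times> (int ^ 'd \<Rightarrow> complex)) set" where
  "Vexplicit v Sig S = {p \<in> Dunion v Sig. S \<subseteq> fst p \<and>
     (\<forall>m\<in>semig v (fst p). (\<exists>i\<in>S. pair m (v i) \<noteq> 0) \<longrightarrow> snd p m = 0)}"

text \<open>If (T, g) and (T', g') come from g'' on
  U_(T \<inter> T'), take an integral form m0 on T vanishing exactly on T \<inter> T'; it is a unit on
  U_(T \<inter> T'), so g m0 \<noteq> 0, which forces m0 into sigma-perp and hence S \<subseteq> T'.  For m' in
  T'-dual off sigma-perp, m' + k m0 lies in T-dual, so g'' (m') g'' (m0)^k = g (m' + k m0) = 0.\<close>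
lemma Vexplicit_saturated:
  assumes SF: "stacky_fan n v Sig" and p: "(T, g) \<in> Vexplicit v Sig S"
    and p': "(T', g') \<in> Dunion v Sig" and gl: "glue v (T, g) (T', g')"
  shows "(T', g') \<in> Vexplicit v Sig S"
proof -
  have T: "T \<in> Sig" and T': "T' \<in> Sig" using p p' by (auto simp: Vexplicit_def Dunion_def)
  have ST: "S \<subseteq> T" and gC: "\<And>m. m \<in> semig v T \<Longrightarrow> (\<exists>i\<in>S. pair m (v i) \<noteq> 0) \<Longrightarrow> g m = 0"
    using p by (auto simp: Vexplicit_def)
  obtain g'' where g'': "g'' \<in> Uset v (T \<inter> T')" "\<forall>m\<in>semig v T. g m = g'' m" "\<forall>m\<in>semig v T'. g' m = g'' m"
    using gl by (auto simp: glue_def)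
  obtain m0 where m0: "\<forall>i\<in>T. pair m0 (v i) \<ge> 0 \<and> (pair m0 (v i) = 0 \<longleftrightarrow> i \<in> T')"
    using separating_character[OF SF T T'] by blast
  have m0T: "m0 \<in> semig v T" and m0R: "m0 \<in> semig v (T \<inter> T')" and nm0R: "- m0 \<in> semig v (T \<inter> T')"
    using m0 by (auto simp: semig_def pair_uminus)
  have g0: "g'' m0 \<noteq> 0" using Uset_unit[OF g''(1) m0R nm0R] .
  then have S0: "\<forall>i\<in>S. pair m0 (v i) = 0" using gC m0T g''(2) by fastforce
  then have ST': "S \<subseteq> T'" using ST m0 by blast
  have "g' m' = 0" if m': "m' \<in> semig v T'" and j: "j \<in> S" "pair m' (v j) \<noteq> 0" for m' j
  proof -
    have m'R: "m' \<in> semig v (T \<inter> T')" using m' semig_anti[of "T \<inter> T'" T'] by auto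
    have "\<forall>i\<in>T. pair m0 (v i) \<ge> 0" using m0 by blast
    moreover have "\<forall>i\<in>T. pair m0 (v i) = 0 \<longrightarrow> pair m' (v i) \<ge> 0" using m0 m' by (auto simp: semig_def)
    ultimately obtain k where mT: "m' + of_nat k *s m0 \<in> semig v T"
      using shift_into_semig[OF sf_fin[OF SF T]] by blast
    have "pair (m' + of_nat k *s m0) (v j) \<noteq> 0" using j S0 by (simp add: pair_add pair_smult)
    then have "g'' (m' + of_nat k *s m0) = 0" using gC[OF mT] j g''(2) mT by auto
    moreover have "g'' (m' + of_nat k *s m0) = g'' m' * g'' m0 ^ k"
      using Uset_power[OF g''(1) m'R m0R] by blast
    ultimately have "g'' m' = 0" using g0 by simp
    then show "g' m' = 0" using g''(3) m' by simp
  qed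
  then show ?thesis using p' ST' by (auto simp: Vexplicit_def)
qed

lemma closed_fun_eq0: "closed {g :: 'a \<Rightarrow> 'b::{t2_space,zero}. g m = 0}"
  by (rule closed_Collect_eq) (auto intro: continuous_on_product_coordinates)

lemma Vexplicit_closed:
  assumes "stacky_fan n v Sig"
  shows "closedX v Sig (Vexplicit v Sig S)"
  unfolding closedX_def
proof (intro conjI ballI)
  show "Vexplicit v Sig S \<subseteq> Dunion v Sig" by (auto simp: Vexplicit_def)
  show "saturated v Sig (Vexplicit v Sig S)"
    unfolding saturated_def using Vexplicit_saturated[OF assms] by fast
next
  fix T assume T: "T \<in> Sig"
  show "closedin (top_of_set (Uset v T)) {g. (T, g) \<in> Vexplicit v Sig S}"
  proof (cases "S \<subseteq> T")
    case True
    have "{g. (T, g) \<in> Vexplicit v Sig S}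
        = Uset v T \<inter> (\<Inter>m\<in>{m\<in>semig v T. \<exists>i\<in>S. pair m (v i) \<noteq> 0}. {g. g m = 0})"
      using T True by (auto simp: Vexplicit_def Dunion_def)
    then show ?thesis by (simp add: closedin_closed_Int closed_INT closed_fun_eq0)
  next
    case False
    then show ?thesis by (auto simp: Vexplicit_def)
  qed
qed

lemma orbit_subset_Vexplicit:
  assumes SF: "stacky_fan n v Sig" and SS: "S \<in> Sig"
  shows "orbit_pts v Sig S \<subseteq> Vexplicit v Sig S"
proof
  fix p assume "p \<in> orbit_pts v Sig S"
  then obtain t where p: "p \<in> Dunion v Sig" "torus_pt t" "glue v p (S, \<lambda>m. t m * gamma_dist v S m)"
    by (auto simp: orbit_pts_def)
  have gam: "(S, \<lambda>m. t m * gamma_dist v S m) \<in> Vexplicit v Sig S"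
    using gamma_Uset[OF p(2)] SS by (auto simp: Vexplicit_def Dunion_def gamma_dist_def)
  obtain T g where pTg: "p = (T, g)" by (cases p)
  have "glue v (S, \<lambda>m. t m * gamma_dist v S m) (T, g)" using glue_sym p(3) pTg by blast
  from Vexplicit_saturated[OF SF gam _ this] show "p \<in> Vexplicit v Sig S" using p(1) pTg by simp
qed

lemma Vorb_subset_Vexplicit:
  assumes "stacky_fan n v Sig" "S \<in> Sig"
  shows "Vorb v Sig S \<subseteq> Vexplicit v Sig S"
  unfolding Vorb_def using Vexplicit_closed[OF assms(1)] orbit_subset_Vexplicit[OF assms] by blast


section \<open>Points q(x) in V(sigma) as limits of orbit points\<close>

text \<open>Pointwise limits of orbit points within one chart lie in V(sigma), as the closed sets of
  X(Sigma) meet each chart in a closed set for the topology of pointwise convergence.\<close>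
lemma Vorb_closed_limit:
  assumes T0: "T0 \<in> Sig" and orb: "\<forall>k. (T0, f k) \<in> orbit_pts v Sig S"
    and lim: "\<forall>m. (\<lambda>k. f k m) \<longlonglongrightarrow> g m" and g: "g \<in> Uset v T0"
  shows "(T0, g) \<in> Vorb v Sig S"
  unfolding Vorb_def
proof (intro InterI, clarify)
  fix C assume C: "closedX v Sig C" "orbit_pts v Sig S \<subseteq> C"
  have "closedin (top_of_set (Uset v T0)) {g. (T0, g) \<in> C}" using C(1) T0 by (simp add: closedX_def)
  then obtain K where K: "closed K" "{g. (T0, g) \<in> C} = Uset v T0 \<inter> K" by (auto simp: closedin_closed)
  have "limitin (product_topology (\<lambda>i. euclidean) UNIV) f g sequentially"
    using lim by (simp add: limitin_componentwise)
  then have "f \<longlonglongrightarrow> g" by (simp add: euclidean_product_topology)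
  moreover have "\<forall>k. f k \<in> K" using orb C(2) K(2) by blast
  ultimately have "g \<in> K" using K(1) by (intro Lim_in_closed_set[of K f]) auto
  then show "(T0, g) \<in> C" using g K(2) by blast
qed

text \<open>If y vanishes exactly on the rays of sigma (a face of T0), then q(y) is in the torus
  orbit of the distinguished point: it is that point translated by the character
  m \<mapsto> prod over i not in sigma of y_i ^ (m, v_i).\<close>
lemma qchart_orbit:
  assumes SF: "stacky_fan n v Sig" and SS: "S \<in> Sig" and T0: "T0 \<in> Sig" and ST: "S \<subseteq> T0"
    and y: "\<And>i. y i = 0 \<longleftrightarrow> i \<in> S"
  shows "(T0, qchart n v T0 y) \<in> orbit_pts v Sig S"
proof -
  define t where "t m = (\<Prod>i\<in>{..<n} - S. y i powi pair m (v i))" for m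
  have tt: "torus_pt t"
    unfolding torus_pt_def t_def using y
    by (auto simp: prod_zero_iff pair_add power_int_add prod.distrib[symmetric])
  have gam: "t m * gamma_dist v S m = qchart n v S y m" if m: "m \<in> semig v S" for m
  proof (cases "\<forall>i\<in>S. pair m (v i) = 0")
    case True
    have "qchart n v S y m = (\<Prod>i<n. y i powi pair m (v i))" using m by (simp add: qchart_def)
    also have "\<dots> = t m" unfolding t_def
      by (rule prod.mono_neutral_right) (use True in auto)
    finally show ?thesis using True m by (simp add: gamma_dist_def)
  next
    case False
    then obtain j where j: "j \<in> S" "pair m (v j) \<noteq> 0" by blast
    have "j < n" using j sf_sub[OF SF SS] by auto
    have "y j powi pair m (v j) = 0" using j y by simp
    then have "(\<Prod>i<n. y i powi pair m (v i)) = 0" using \<open>j < n\<close>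
      by (meson finite_lessThan lessThan_iff prod_zero)
    then have "qchart n v S y m = 0" using m by (simp add: qchart_def)
    moreover have "gamma_dist v S m = 0" using False by (simp add: gamma_dist_def)
    ultimately show ?thesis by simp
  qed
  have "glue v (T0, qchart n v T0 y) (S, \<lambda>m. t m * gamma_dist v S m)"
    unfolding glue_def
  proof (intro bexI[of _ "qchart n v S y"] conjI ballI)
    show "qchart n v S y \<in> Uset v (fst (T0, qchart n v T0 y) \<inter> fst (S, \<lambda>m. t m * gamma_dist v S m))"
      using ST y by (auto simp: Int_absorb1 intro: qchart_Uset)
  qed (use semig_anti[OF ST] gam in \<open>auto simp: qchart_def\<close>)
  moreover have "qchart n v T0 y \<in> Uset v T0" using ST y by (intro qchart_Uset) auto
  ultimately show ?thesis unfolding orbit_pts_def using tt T0 by (auto simp: Dunion_def)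
qed

definition approx_seq :: "nat set \<Rightarrow> (nat \<Rightarrow> complex) \<Rightarrow> nat \<Rightarrow> nat \<Rightarrow> complex" where
  "approx_seq S x k i =
     (if i \<in> S then 0 else if x i \<noteq> 0 then x i else complex_of_real (inverse (real (Suc k))))"

lemma approx_seq_eq_0_iff: "approx_seq S x k i = 0 \<longleftrightarrow> i \<in> S"
proof -
  have "(1::complex) + of_nat k \<noteq> 0"
    using of_nat_neq_0[of k, where ?'a=complex] by (simp add: add.commute)
  then show ?thesis by (simp add: approx_seq_def)
qed

text \<open>If q(x) vanishes off sigma-perp, then q of the approximating points converges to q(x):
  on sigma-perp the moved coordinates enter with nonnegative exponents.\<close>
lemma qchart_approx_tendsto:
  assumes Sn: "S \<subseteq> {..<n}" and xz: "\<forall>i<n. x i = 0 \<longrightarrow> i \<in> T0"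
    and H: "\<forall>m\<in>semig v T0. (\<exists>i\<in>S. pair m (v i) \<noteq> 0) \<longrightarrow> qchart n v T0 x m = 0"
  shows "(\<lambda>k. qchart n v T0 (approx_seq S x k) m) \<longlonglongrightarrow> qchart n v T0 x m"
proof (cases "m \<in> semig v T0 \<and> (\<forall>j\<in>S. pair m (v j) = 0)")
  case False
  have "qchart n v T0 (approx_seq S x k) m = 0" for k
  proof (cases "m \<in> semig v T0")
    case True
    then obtain j where j: "j \<in> S" "pair m (v j) \<noteq> 0" using False by blast
    have "approx_seq S x k j powi pair m (v j) = 0" using j by (simp add: approx_seq_def)
    then have "(\<Prod>i<n. approx_seq S x k i powi pair m (v i)) = 0" using j Sn
      by (meson finite_lessThan lessThan_iff prod_zero subsetD)
    then show ?thesis by (simp add: qchart_def)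
  qed (simp add: qchart_def)
  moreover have "qchart n v T0 x m = 0" using H False by (auto simp: qchart_def)
  ultimately show ?thesis by simp
next
  case perp: True
  have "(\<lambda>k. approx_seq S x k i powi pair m (v i)) \<longlonglongrightarrow> x i powi pair m (v i)" if i: "i < n" for i
  proof (cases "i \<notin> S \<and> x i = 0")
    case moved: True
    then have "pair m (v i) \<ge> 0" using xz i perp by (simp add: semig_def)
    then obtain d where d: "pair m (v i) = int d" by (metis nonneg_int_cases)
    have "(\<lambda>k. complex_of_real (inverse (real (Suc k))) ^ d) \<longlonglongrightarrow> complex_of_real 0 ^ d"
      by (intro tendsto_power tendsto_of_real LIMSEQ_inverse_real_of_nat)
    then show ?thesis using moved d by (simp add: approx_seq_def)
  next
    case unmoved: False
    show ?thesis
    proof (cases "i \<in> S")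
      case True
      then show ?thesis using perp by (simp add: approx_seq_def)
    next
      case False
      then show ?thesis using unmoved by (simp add: approx_seq_def)
    qed
  qed
  then have "(\<lambda>k. \<Prod>i<n. approx_seq S x k i powi pair m (v i)) \<longlonglongrightarrow> (\<Prod>i<n. x i powi pair m (v i))"
    by (intro tendsto_prod) auto
  then show ?thesis using perp by (simp add: qchart_def)
qed

lemma qchart_in_Vorb:
  assumes SF: "stacky_fan n v Sig" and SS: "S \<in> Sig" and T0: "T0 \<in> Sig" and ST: "S \<subseteq> T0"
    and xz: "\<forall>i<n. x i = 0 \<longrightarrow> i \<in> T0"
    and H: "\<forall>m\<in>semig v T0. (\<exists>i\<in>S. pair m (v i) \<noteq> 0) \<longrightarrow> qchart n v T0 x m = 0"
  shows "(T0, qchart n v T0 x) \<in> Vorb v Sig S"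
proof (rule Vorb_closed_limit[OF T0])
  show "\<forall>k. (T0, qchart n v T0 (approx_seq S x k)) \<in> orbit_pts v Sig S"
    using qchart_orbit[OF SF SS T0 ST] approx_seq_eq_0_iff by blast
  show "\<forall>m. (\<lambda>k. qchart n v T0 (approx_seq S x k) m) \<longlonglongrightarrow> qchart n v T0 x m"
    using qchart_approx_tendsto[OF sf_sub[OF SF SS] xz H] by blast
  show "qchart n v T0 x \<in> Uset v T0" using xz by (intro qchart_Uset) auto
qed

section \<open>L~_sigma is contained in the zero set of I~_sigma\<close>

text \<open>Let q(x) vanish off sigma-perp in the chart T.  Then every proper face T' of T not
  containing sigma has a vanishing coordinate x_i, i in T - T': otherwise q(x) does not
  vanish at an integral form exposing T', which then lies in sigma-perp.\<close>
lemma chart_face_coordinate: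
  assumes SF: "stacky_fan n v Sig" and T: "T \<in> Sig" and xz: "\<forall>i\<in>{..<n} - T. x i \<noteq> 0"
    and ST: "S \<subseteq> T"
    and H: "\<forall>m\<in>semig v T. (\<exists>i\<in>S. pair m (v i) \<noteq> 0) \<longrightarrow> qchart n v T x m = 0"
    and T': "T' \<in> Sig" "cone_of v T' face_of cone_of v T" "\<not> cone_of v S \<subseteq> cone_of v T'"
  shows "\<exists>i\<in>T - T'. x i = 0"
proof (rule ccontr)
  assume nz: "\<not> (\<exists>i\<in>T - T'. x i = 0)"
  obtain m where m: "\<forall>i\<in>T. pair m (v i) \<ge> 0 \<and> (pair m (v i) = 0 \<longleftrightarrow> i \<in> T')"
    using face_character[OF SF T T'(1,2)] by blast
  have mT: "m \<in> semig v T" using m by (simp add: semig_def)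
  have "x i powi pair m (v i) \<noteq> 0" if "i < n" for i
    using xz nz m that by (cases "x i = 0") auto
  then have "qchart n v T x m \<noteq> 0" using mT by (simp add: qchart_def prod_zero_iff)
  then have "\<forall>j\<in>S. pair m (v j) = 0" using H mT by blast
  then have "S \<subseteq> T'" using ST m by blast
  then show False using T'(3) cone_of_mono[OF sf_fin[OF SF T'(1)]] by blast
qed

lemma Ltilde_subset_zero_set:
  assumes SF: "stacky_fan n v Sig" and SS: "S \<in> Sig" and x: "x \<in> Ltilde n v Sig S"
  shows "x \<in> zero_set (Itilde n v Sig S)"
proof -
  obtain T where T: "T \<in> Sig" "\<forall>i\<in>{..<n} - T. x i \<noteq> 0" "(T, qchart n v T x) \<in> Vorb v Sig S"
    using x by (auto simp: Ltilde_def)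
  have "(T, qchart n v T x) \<in> Vexplicit v Sig S" using Vorb_subset_Vexplicit[OF SF SS] T(3) by blast
  then have ST: "S \<subseteq> T" and H: "\<forall>m\<in>semig v T. (\<exists>i\<in>S. pair m (v i) \<noteq> 0) \<longrightarrow> qchart n v T x m = 0"
    by (auto simp: Vexplicit_def)
  have "cone_of v S \<subseteq> cone_of v T" using cone_of_mono[OF sf_fin[OF SF T(1)] ST] .
  then have "Itilde n v Sig S \<subseteq> Imu n v Sig T S" using T(1) by (auto simp: Itilde_def)
  moreover have "peval p x = 0" if p: "p \<in> Imu n v Sig T S" for p
  proof (rule gen_ideal_vanish[OF _ p[unfolded Imu_def]], intro ballI)
    fix g assume "g \<in> {monom_set (T - T') | T'. T' \<in> Sig \<and>
        cone_of v T' face_of cone_of v T \<and> cone_of v T' \<noteq> cone_of v T \<and> \<not> cone_of v S \<subseteq> cone_of v T'}"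
    then obtain T' where g: "g = monom_set (T - T')" "T' \<in> Sig" "cone_of v T' face_of cone_of v T"
        "\<not> cone_of v S \<subseteq> cone_of v T'" by blast
    then obtain i0 where "i0 \<in> T - T'" "x i0 = 0"
      using chart_face_coordinate[OF SF T(1,2) ST H] by blast
    then show "\<exists>A i0. g = monom_set A \<and> finite A \<and> i0 \<in> A \<and> x i0 = 0"
      using g(1) sf_fin[OF SF T(1)] by blast
  qed
  ultimately show ?thesis by (auto simp: zero_set_def)
qed

section \<open>The zero set of I~_sigma is contained in L~_sigma\<close>

text \<open>A zero x of I~_sigma admits a cone M containing sigma all of whose proper faces not
  containing sigma have a vanishing coordinate in M - T'.  Otherwise, choosing a bad face for
  every such M, the product of the coordinates of all the differences is a monomial lying
  in every I~_(M,sigma), hence in I~_sigma, but not vanishing at x.\<close>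
lemma zero_set_Itilde_witness:
  assumes SF: "stacky_fan n v Sig" and x: "x \<in> zero_set (Itilde n v Sig S)"
  shows "\<exists>M\<in>Sig. cone_of v S \<subseteq> cone_of v M \<and> (\<forall>T'\<in>Sig. cone_of v T' face_of cone_of v M \<and>
     cone_of v T' \<noteq> cone_of v M \<and> \<not> cone_of v S \<subseteq> cone_of v T' \<longrightarrow> (\<exists>i\<in>M - T'. x i = 0))"
proof (rule ccontr)
  define Ms where "Ms = {M\<in>Sig. cone_of v S \<subseteq> cone_of v M}"
  define bad where "bad M T' \<longleftrightarrow> T' \<in> Sig \<and> cone_of v T' face_of cone_of v M \<and>
     cone_of v T' \<noteq> cone_of v M \<and> \<not> cone_of v S \<subseteq> cone_of v T' \<and> (\<forall>i\<in>M - T'. x i \<noteq> 0)" for M T'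
  assume "\<not> ?thesis"
  then have "\<forall>M\<in>Ms. \<exists>T'. bad M T'" unfolding Ms_def bad_def by blast
  then obtain f where f: "\<forall>M\<in>Ms. bad M (f M)" by metis
  define U where "U = (\<Union>M\<in>Ms. M - f M)"
  have Usub: "U \<subseteq> {..<n}" using sf_sub[OF SF] by (auto simp: U_def Ms_def)
  then have finU: "finite U" using finite_subset by blast
  have "monom_set U \<in> Imu n v Sig M S" if M: "M \<in> Ms" for M
  proof -
    define A where "A = M - f M"
    have AU: "A \<subseteq> U" using M by (auto simp: U_def A_def)
    then have "monom_set U = monom_set ((U - A) \<union> A)" by (simp add: Un_absorb2)
    also have "\<dots> = monom_set (U - A) * monom_set A"
      using finU finite_subset[OF AU finU] by (intro monom_set_union) auto
    finally have "monom_set U = monom_set (U - A) * monom_set A" .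
    moreover have "monom_set (U - A) \<in> polys n" using Usub finU by (intro monom_set_polys) auto
    moreover have "monom_set A \<in> {monom_set (M - T) | T. T \<in> Sig \<and>
      cone_of v T face_of cone_of v M \<and> cone_of v T \<noteq> cone_of v M \<and> \<not> cone_of v S \<subseteq> cone_of v T}"
      using f M unfolding bad_def A_def by blast
    ultimately show ?thesis unfolding Imu_def gen_ideal_def
      by (intro CollectI exI[of _ "{monom_set A}"] exI[of _ "\<lambda>_. monom_set (U - A)"]) auto
  qed
  then have "monom_set U \<in> Itilde n v Sig S"
    using monom_set_polys[OF Usub finU] unfolding Itilde_def Ms_def by blast
  then have "peval (monom_set U) x = 0" using x by (auto simp: zero_set_def)
  moreover have "\<forall>i\<in>U. x i \<noteq> 0" using f by (auto simp: U_def bad_def)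
  ultimately show False using finU by (simp add: peval_monom_set prod_zero_iff)
qed

text \<open>For such a witness M and a chart T0 of x, every nonempty face F of T0 containing all
  rays with vanishing coordinate contains sigma: F \<inter> M is a face of M, and if it were a
  proper face not containing sigma it would contain a ray of M with vanishing coordinate
  outside of it.\<close>
lemma witness_face_contains:
  assumes SF: "stacky_fan n v Sig" and T0: "T0 \<in> Sig" and xz: "\<forall>i\<in>{..<n} - T0. x i \<noteq> 0"
    and M: "M \<in> Sig" "cone_of v S \<subseteq> cone_of v M"
    and MP: "\<forall>T'\<in>Sig. cone_of v T' face_of cone_of v M \<and> cone_of v T' \<noteq> cone_of v M \<and>
               \<not> cone_of v S \<subseteq> cone_of v T' \<longrightarrow> (\<exists>i\<in>M - T'. x i = 0)"
    and F: "F face_of cone_of v T0" "F \<noteq> {}" and Z: "\<forall>i<n. x i = 0 \<longrightarrow> rvec (v i) \<in> F"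
  shows "cone_of v S \<subseteq> F"
proof -
  have finT0: "finite T0" and finM: "finite M" using sf_fin[OF SF] T0 M by blast+
  define G where "G = F \<inter> (cone_of v T0 \<inter> cone_of v M)"
  have f1: "(cone_of v T0 \<inter> cone_of v M) face_of cone_of v T0" using sf_int[OF SF T0 M(1)] .
  have f2: "(cone_of v T0 \<inter> cone_of v M) face_of cone_of v M"
    using sf_int[OF SF M(1) T0] by (simp add: Int_commute)
  have "G face_of cone_of v T0" unfolding G_def using face_of_Int[OF F(1) f1] .
  then have "G face_of (cone_of v T0 \<inter> cone_of v M)"
    by (rule face_of_subset) (auto simp: G_def)
  then have GM: "G face_of cone_of v M" using f2 face_of_trans by blast
  have "0 \<in> F" using face_convex_cone[OF finT0 F] convex_cone_contains_0 by blast
  then have "0 \<in> G" using cone_of_0 by (auto simp: G_def)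
  then obtain R where R: "R \<in> Sig" "cone_of v R = G" using sf_face[OF SF M(1) GM] by blast
  show ?thesis
  proof (cases "G = cone_of v M")
    case True
    then show ?thesis using M(2) by (auto simp: G_def)
  next
    case False
    show ?thesis
    proof (rule ccontr)
      assume "\<not> cone_of v S \<subseteq> F"
      then have "\<not> cone_of v S \<subseteq> cone_of v R" using R by (auto simp: G_def)
      then obtain i where i: "i \<in> M - R" "x i = 0" using MP R GM False by auto
      have "i < n" using sf_sub[OF SF M(1)] i by auto
      then have "i \<in> T0" using xz i by blast
      then have "rvec (v i) \<in> cone_of v R"
        using Z i \<open>i < n\<close> cone_of_inc[OF finM] cone_of_inc[OF finT0] R by (auto simp: G_def)
      then have "i \<in> R" using sf_ray_in[OF SF M(1) R(1)] R GM i by blast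
      then show False using i by blast
    qed
  qed
qed

text \<open>If every face of T0 containing the rays of vanishing coordinates contains sigma, then
  q(x) vanishes off sigma-perp: if q(x)(m) \<noteq> 0, the face of T0 cut out by m contains these
  rays, hence sigma, so m lies in sigma-perp.\<close>
lemma qchart_vanish_from_faces:
  assumes finT0: "finite T0" and finS: "finite S" and xz: "\<forall>i<n. x i = 0 \<longrightarrow> i \<in> T0"
    and faces: "\<And>F. F face_of cone_of v T0 \<Longrightarrow> F \<noteq> {} \<Longrightarrow> \<forall>i<n. x i = 0 \<longrightarrow> rvec (v i) \<in> F
                  \<Longrightarrow> cone_of v S \<subseteq> F"
    and mT: "m \<in> semig v T0" and j: "j \<in> S" "pair m (v j) \<noteq> 0"
  shows "qchart n v T0 x m = 0"
proof (rule ccontr)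
  assume "qchart n v T0 x m \<noteq> 0"
  then have "(\<Prod>i<n. x i powi pair m (v i)) \<noteq> 0" using mT by (simp add: qchart_def)
  then have zz: "pair m (v i) = 0" if "i < n" "x i = 0" for i
    using that by (simp add: prod_zero_iff)
  have "cone_of v T0 \<subseteq> {y. rvec m \<bullet> y \<ge> 0}"
    by (rule cone_of_least[OF finT0 convex_cone_halfspace_ge])
       (use mT in \<open>auto simp: semig_def rvec_inner\<close>)
  then have ge: "\<forall>y\<in>cone_of v T0. rvec m \<bullet> y \<ge> 0" by blast
  define F where "F = cone_of v T0 \<inter> {y. (- rvec m) \<bullet> y = 0}"
  have Ff: "F face_of cone_of v T0" unfolding F_def
    by (rule face_of_Int_supporting_hyperplane_le)
       (use cone_of_convex_cone[of v T0] ge in \<open>auto simp: convex_cone_def\<close>)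
  have "0 \<in> F" using cone_of_0 by (simp add: F_def)
  moreover have "\<forall>i<n. x i = 0 \<longrightarrow> rvec (v i) \<in> F"
    using xz zz cone_of_inc[OF finT0] by (auto simp: F_def rvec_inner)
  ultimately have "cone_of v S \<subseteq> F" using faces[OF Ff] by blast
  then have "rvec (v j) \<in> F" using cone_of_inc[OF finS] j by blast
  then show False using j by (simp add: F_def rvec_inner)
qed

lemma zero_set_subset_Ltilde:
  assumes SF: "stacky_fan n v Sig" and SS: "S \<in> Sig"
    and x: "x \<in> zero_set (Itilde n v Sig S)" and xC: "x \<in> Cox n Sig"
  shows "x \<in> Ltilde n v Sig S"
proof -
  obtain T0 where T0: "T0 \<in> Sig" "(\<Prod>i\<in>{..<n} - T0. x i) \<noteq> 0" using xC by (auto simp: Cox_def)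
  have xz: "\<forall>i\<in>{..<n} - T0. x i \<noteq> 0" using T0(2) by (simp add: prod_zero_iff)
  have finT0: "finite T0" using sf_fin[OF SF T0(1)] .
  obtain M where M: "M \<in> Sig" "cone_of v S \<subseteq> cone_of v M"
    and MP: "\<forall>T'\<in>Sig. cone_of v T' face_of cone_of v M \<and> cone_of v T' \<noteq> cone_of v M \<and>
               \<not> cone_of v S \<subseteq> cone_of v T' \<longrightarrow> (\<exists>i\<in>M - T'. x i = 0)"
    using zero_set_Itilde_witness[OF SF x] by blast
  note faces = witness_face_contains[OF SF T0(1) xz M MP]
  have "cone_of v S \<subseteq> cone_of v T0"
  proof (rule faces)
    show "cone_of v T0 face_of cone_of v T0"
      using cone_of_convex_cone[of v T0] by (simp add: convex_cone_def face_of_refl)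
    show "cone_of v T0 \<noteq> {}" using cone_of_0 by blast
    show "\<forall>i<n. x i = 0 \<longrightarrow> rvec (v i) \<in> cone_of v T0" using xz cone_of_inc[OF finT0] by blast
  qed
  then have ST: "S \<subseteq> T0" using sf_cone_subset[OF SF SS T0(1)] by blast
  have xz': "\<forall>i<n. x i = 0 \<longrightarrow> i \<in> T0" using xz by blast
  have "\<forall>m\<in>semig v T0. (\<exists>i\<in>S. pair m (v i) \<noteq> 0) \<longrightarrow> qchart n v T0 x m = 0"
    using qchart_vanish_from_faces[OF finT0 sf_fin[OF SF SS] xz' faces] by blast
  then have "(T0, qchart n v T0 x) \<in> Vorb v Sig S" using qchart_in_Vorb[OF SF SS T0(1) ST xz'] by blast
  then show ?thesis using xC T0(1) xz unfolding Ltilde_def by blast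
qed

theorem proposition3p7:
  fixes n :: nat and v :: "nat \<Rightarrow> int ^ 'd" and Sig :: "nat set set" and S :: "nat set"
  assumes "stacky_fan n v Sig" and "S \<in> Sig"
  shows "Ltilde n v Sig S = zero_set (Itilde n v Sig S) \<inter> Cox n Sig"
proof
  show "Ltilde n v Sig S \<subseteq> zero_set (Itilde n v Sig S) \<inter> Cox n Sig"
    using Ltilde_subset_zero_set[OF assms] by (auto simp: Ltilde_def)
  show "zero_set (Itilde n v Sig S) \<inter> Cox n Sig \<subseteq> Ltilde n v Sig S"
    using zero_set_subset_Ltilde[OF assms] by blast
qed

end
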